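(* There exists a stably correct CRN protocol $\Pi=(\mathcal{S},\mathcal{R})$ such that $\operatorname{RT}_{\mathrm{stab}}^{\Pi}(n)=O(\log n)$, but if the minimum in the definition of $\operatorname{RT}_{\mathrm{stab}}^{\Pi}(n)$ is restricted to runtime policies $\varrho$ with $|\varrho(\mathbf{c})|\le1$ for every configuration $\mathbf{c}$, then the resulting quantity is $\Omega(n)$.
   Context: CRN model: $\Pi=(\mathcal{S},\mathcal{R})$, finite species set, finite reaction set $\mathcal{R}\subset\mathbb{N}^{\mathcal{S}}\times\mathbb{N}^{\mathcal{S}}$; reactions $(\mathbf{r},\mathbf{p})$ with $\|\mathbf{r}\|_1\in\{1,2\}$, $\|\mathbf{r}\|_1\le\|\mathbf{p}\|_1$; every $\mathbf{r}$ with $1\le\|\mathbf{r}\|_1\le2$ has a nonempty set $\mathcal{R}(\mathbf{r})$ of reactions; void reactions ($\mathbf{r}=\mathbf{p}$) alone in their $\mathcal{R}(\mathbf{r})$; $\operatorname{NV}(\mathcal{R})$ non-void; finite density. Configurations $\mathbf{c}\in\mathbb{N}^{\mathcal{S}}$, $\|\mathbf{c}\|_1\ge1$; applicability $\mathbf{r}\le\mathbf{c}$, result $\mathbf{c}-\mathbf{r}+\mathbf{p}$; reachability $\stackrel{*}{\rightharpoonup}$; $\mathrm{stab}(Z)=\{\mathbf{c}\in Z:\mathbf{c}\stackrel{*}{\rightharpoonup}\mathbf{c}'\Rightarrow\mathbf{c}'\in Z\}$. Weakly fair executions $\langle\mathbf{c}^t,\alpha^t\rangle$: every reaction applicable at step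 $t$ is later scheduled or becomes inapplicable. Correctness is w.r.t. an interface $\mathcal{I}=(\mathcal{U},\mu,\mathcal{C})$ giving target sets $Z_{\mathcal{I}}(\mathbf{c}^0)=\{\mathbf{c}:(\mu(\mathbf{c}^0),\mu(\mathbf{c}))\in\mathcal{C}\}$ ($\mu(\mathbf{c})(u)=\sum_{\mu(A)=u}\mathbf{c}(A)$) and valid initial configurations (those with $Z_{\mathcal{I}}(\mathbf{c}^0)\ne\emptyset$); stably correct: every weakly fair valid execution reaches $\mathrm{stab}(Z_{\mathcal{I}}(\mathbf{c}^0))$, the first such step being the stabilization step. Runtime: stochastic scheduler with volume $\varphi=\Theta(n)$, $n=\|\mathbf{c}^0\|_1$; propensity $\pi_{\mathbf{c}}(\alpha)=\mathbf{c}(A)/|\mathcal{R}(\mathbf{r})|$ ($\mathbf{r}=A$), $\frac1\varphi\binom{\mathbf{c}(A)}2/|\mathcal{R}(\mathbf{r})|$ ($\mathbf{r}=2A$), $\frac1\varphi\mathbf{c}(A)\mathbf{c}(B)/|\mathcal{R}(\mathbf{r})|$ ($\mathbf{r}=A+B$); step time span $1/\pi_{\mathbf{c}}(\mathcal{R})$. $\tau(\eta,t,Q)$ = least $s>t$ with $\alpha^{s-1}\in Q$ or every reaction of $Q$ inapplicable at some step in $[t,s]$. Runtime policy $\varrho(\mathbf{c})\subseteq\operatorname{NV}(\mathcal{R})$; skipping policy $\sigma(t)\ge t$; rounds $t(0)=0$, $t_e(i)=\sigma(t(i))$, $\mathbf{e}^i=\mathbf{c}^{t_e(i)}$, $t(i+1)=\tau(\eta,t_e(i),\varrho(\mathbf{e}^i))$;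 $\operatorname{TC}^{\varrho}(\mathbf{c})$ = expected total time span of the steps before $\tau(\eta_r,0,\varrho(\mathbf{c}))$ of a stochastic execution from $\mathbf{c}$; $\operatorname{RT}_{\mathrm{stab}}^{\varrho,\sigma}(\eta)=\sum_{i<i^*}\operatorname{TC}^{\varrho}(\mathbf{e}^i)$, $i^*=\min\{i:t(i)\ge t^*\}$, $t^*$ the stabilization step; $\operatorname{RT}_{\mathrm{stab}}^{\Pi}(n)=\min_\varrho\max_{\eta,\sigma}\operatorname{RT}_{\mathrm{stab}}^{\varrho,\sigma}(\eta)$, max over weakly fair valid executions with initial molecular count $n$ and all skipping policies. *)

theory Defs
  imports Complex_Main "HOL-Library.Landau_Symbols" "HOL-Library.Extended_Nonnegative_Real"
begin

(* Species are natural numbers; a CRN has a finite species set S \<subseteq> nat.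
   Vectors in N^S are functions nat \<Rightarrow> nat vanishing outside S. *)
type_synonym conf = "nat \<Rightarrow> nat"
type_synonym reaction = "conf \<times> conf"

definition supp_in :: "nat set \<Rightarrow> conf \<Rightarrow> bool" where
  "supp_in S c \<longleftrightarrow> (\<forall>A. A \<notin> S \<longrightarrow> c A = 0)"

definition size1 :: "nat set \<Rightarrow> conf \<Rightarrow> nat" where
  "size1 S c = (\<Sum>A\<in>S. c A)"

definition is_config :: "nat set \<Rightarrow> conf \<Rightarrow> bool" where
  "is_config S c \<longleftrightarrow> supp_in S c \<and> 1 \<le> size1 S c"

definition Rof :: "reaction set \<Rightarrow> conf \<Rightarrow> reaction set" where
  "Rof R r = {\<alpha>\<in>R. fst \<alpha> = r}"

definition NV :: "reaction set \<Rightarrow> reaction set" where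
  "NV R = {\<alpha>\<in>R. fst \<alpha> \<noteq> snd \<alpha>}"

definition applicable :: "conf \<Rightarrow> reaction \<Rightarrow> bool" where
  "applicable c \<alpha> \<longleftrightarrow> (\<forall>A. fst \<alpha> A \<le> c A)"

definition apply_rx :: "conf \<Rightarrow> reaction \<Rightarrow> conf" where
  "apply_rx c \<alpha> = (\<lambda>A. c A - fst \<alpha> A + snd \<alpha> A)"

definition step :: "reaction set \<Rightarrow> conf \<Rightarrow> conf \<Rightarrow> bool" where
  "step R c c' \<longleftrightarrow> (\<exists>\<alpha>\<in>R. applicable c \<alpha> \<and> c' = apply_rx c \<alpha>)"

definition reach :: "reaction set \<Rightarrow> conf \<Rightarrow> conf \<Rightarrow> bool" where
  "reach R = (step R)\<^sup>*\<^sup>*"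

definition stab :: "reaction set \<Rightarrow> conf set \<Rightarrow> conf set" where
  "stab R Z = {c\<in>Z. \<forall>c'. reach R c c' \<longrightarrow> c' \<in> Z}"

definition crn :: "nat set \<Rightarrow> reaction set \<Rightarrow> bool" where
  "crn S R \<longleftrightarrow> finite S \<and> finite R \<and>
     (\<forall>(r,p)\<in>R. supp_in S r \<and> supp_in S p \<and> size1 S r \<in> {1,2} \<and> size1 S r \<le> size1 S p) \<and>
     (\<forall>r. supp_in S r \<and> 1 \<le> size1 S r \<and> size1 S r \<le> 2 \<longrightarrow> Rof R r \<noteq> {}) \<and>
     (\<forall>(r,p)\<in>R. r = p \<longrightarrow> Rof R r = {(r,p)})"

definition mu_conf :: "nat set \<Rightarrow> (nat \<Rightarrow> nat) \<Rightarrow> conf \<Rightarrow> (nat \<Rightarrow> nat)" where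
  "mu_conf S \<mu> c = (\<lambda>u. \<Sum>A\<in>{A\<in>S. \<mu> A = u}. c A)"

definition interface :: "nat set \<Rightarrow> nat set \<Rightarrow> (nat \<Rightarrow> nat) \<Rightarrow> ((nat \<Rightarrow> nat) \<times> (nat \<Rightarrow> nat)) set \<Rightarrow> bool" where
  "interface S U \<mu> C \<longleftrightarrow> (\<forall>A\<in>S. \<mu> A \<in> U) \<and> C \<subseteq> {(x,y). supp_in U x \<and> supp_in U y}"

definition Zset :: "nat set \<Rightarrow> (nat \<Rightarrow> nat) \<Rightarrow> ((nat \<Rightarrow> nat) \<times> (nat \<Rightarrow> nat)) set \<Rightarrow> conf \<Rightarrow> conf set" where
  "Zset S \<mu> C c0 = {c. is_config S c \<and> (mu_conf S \<mu> c0, mu_conf S \<mu> c) \<in> C}"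

definition valid_init :: "nat set \<Rightarrow> (nat \<Rightarrow> nat) \<Rightarrow> ((nat \<Rightarrow> nat) \<times> (nat \<Rightarrow> nat)) set \<Rightarrow> conf \<Rightarrow> bool" where
  "valid_init S \<mu> C c0 \<longleftrightarrow> is_config S c0 \<and> Zset S \<mu> C c0 \<noteq> {}"

definition execution :: "nat set \<Rightarrow> reaction set \<Rightarrow> (nat \<Rightarrow> conf) \<Rightarrow> (nat \<Rightarrow> reaction) \<Rightarrow> bool" where
  "execution S R cs as \<longleftrightarrow> is_config S (cs 0) \<and>
     (\<forall>t. as t \<in> R \<and> applicable (cs t) (as t) \<and> cs (Suc t) = apply_rx (cs t) (as t))"

definition weakly_fair :: "reaction set \<Rightarrow> (nat \<Rightarrow> conf) \<Rightarrow> (nat \<Rightarrow> reaction) \<Rightarrow> bool" where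
  "weakly_fair R cs as \<longleftrightarrow>
     (\<forall>t. \<forall>\<alpha>\<in>R. applicable (cs t) \<alpha> \<longrightarrow> (\<exists>s\<ge>t. as s = \<alpha> \<or> \<not> applicable (cs s) \<alpha>))"

definition valid_fair_exec :: "nat set \<Rightarrow> reaction set \<Rightarrow> (nat \<Rightarrow> nat) \<Rightarrow> ((nat \<Rightarrow> nat) \<times> (nat \<Rightarrow> nat)) set
     \<Rightarrow> (nat \<Rightarrow> conf) \<Rightarrow> (nat \<Rightarrow> reaction) \<Rightarrow> bool" where
  "valid_fair_exec S R \<mu> C cs as \<longleftrightarrow>
     execution S R cs as \<and> weakly_fair R cs as \<and> valid_init S \<mu> C (cs 0)"

definition stably_correct :: "nat set \<Rightarrow> reaction set \<Rightarrow> (nat \<Rightarrow> nat) \<Rightarrow> ((nat \<Rightarrow> nat) \<times> (nat \<Rightarrow> nat)) set \<Rightarrow> bool" where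
  "stably_correct S R \<mu> C \<longleftrightarrow>
     (\<forall>cs as. valid_fair_exec S R \<mu> C cs as \<longrightarrow> (\<exists>t. cs t \<in> stab R (Zset S \<mu> C (cs 0))))"

definition stab_step :: "nat set \<Rightarrow> reaction set \<Rightarrow> (nat \<Rightarrow> nat) \<Rightarrow> ((nat \<Rightarrow> nat) \<times> (nat \<Rightarrow> nat)) set
     \<Rightarrow> (nat \<Rightarrow> conf) \<Rightarrow> nat" where
  "stab_step S R \<mu> C cs = (LEAST t. cs t \<in> stab R (Zset S \<mu> C (cs 0)))"

definition finite_density :: "nat set \<Rightarrow> reaction set \<Rightarrow> (nat \<Rightarrow> nat) \<Rightarrow> ((nat \<Rightarrow> nat) \<times> (nat \<Rightarrow> nat)) set \<Rightarrow> bool" where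
  "finite_density S R \<mu> C \<longleftrightarrow>
     (\<exists>\<kappa>::real. \<forall>c0 c. valid_init S \<mu> C c0 \<and> reach R c0 c \<longrightarrow> real (size1 S c) \<le> \<kappa> * real (size1 S c0))"

definition crn_protocol :: "nat set \<Rightarrow> reaction set \<Rightarrow> nat set \<Rightarrow> (nat \<Rightarrow> nat) \<Rightarrow> ((nat \<Rightarrow> nat) \<times> (nat \<Rightarrow> nat)) set \<Rightarrow> bool" where
  "crn_protocol S R U \<mu> C \<longleftrightarrow> crn S R \<and> interface S U \<mu> C \<and> finite_density S R \<mu> C"

(* Propensity with volume vol.  Since ||r||_1 \<in> {1,2}, the product equals
   c(A) for r = A, binom(c(A),2) for r = 2A, and c(A)c(B) for r = A+B. *)
definition propensity :: "nat set \<Rightarrow> reaction set \<Rightarrow> real \<Rightarrow> conf \<Rightarrow> reaction \<Rightarrow> real" where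
  "propensity S R vol c \<alpha> =
     (\<Prod>A\<in>S. real (c A choose fst \<alpha> A)) * (if size1 S (fst \<alpha>) = 1 then 1 else 1 / vol)
       / real (card (Rof R (fst \<alpha>)))"

definition total_prop :: "nat set \<Rightarrow> reaction set \<Rightarrow> real \<Rightarrow> conf \<Rightarrow> real" where
  "total_prop S R vol c = (\<Sum>\<alpha>\<in>R. propensity S R vol c \<alpha>)"

definition span :: "nat set \<Rightarrow> reaction set \<Rightarrow> real \<Rightarrow> conf \<Rightarrow> real" where
  "span S R vol c = 1 / total_prop S R vol c"

(* Expected total time span of the first min(k, tau(eta_r,0,Q)) steps of a stochastic
   execution from c (the jump chain picks alpha with probability pi_c(alpha)/pi_c(R)). *)
primrec tc_trunc :: "nat set \<Rightarrow> reaction set \<Rightarrow> real \<Rightarrow> reaction set \<Rightarrow> nat \<Rightarrow> conf \<Rightarrow> ennreal" where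
  "tc_trunc S R vol Q 0 c = 0"
| "tc_trunc S R vol Q (Suc k) c =
     ennreal (span S R vol c) +
     (if \<exists>\<alpha>\<in>Q. applicable c \<alpha> then
        (\<Sum>\<alpha>\<in>R. ennreal (propensity S R vol c \<alpha> / total_prop S R vol c) *
           (if \<alpha> \<in> Q \<or> \<not> (\<exists>\<beta>\<in>Q. applicable (apply_rx c \<alpha>) \<beta>) then 0
            else tc_trunc S R vol Q k (apply_rx c \<alpha>)))
      else 0)"

definition TC :: "nat set \<Rightarrow> reaction set \<Rightarrow> real \<Rightarrow> reaction set \<Rightarrow> conf \<Rightarrow> ennreal" where
  "TC S R vol Q c = (SUP k. tc_trunc S R vol Q k c)"

definition tau :: "(nat \<Rightarrow> conf) \<Rightarrow> (nat \<Rightarrow> reaction) \<Rightarrow> nat \<Rightarrow> reaction set \<Rightarrow> nat" where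
  "tau cs as t Q = (LEAST s. t < s \<and>
      (as (s - 1) \<in> Q \<or> (\<exists>u. t \<le> u \<and> u \<le> s \<and> (\<forall>\<alpha>\<in>Q. \<not> applicable (cs u) \<alpha>))))"

(* round start steps t(i); t_e(i) = sigma (t(i)) *)
primrec rnd :: "(conf \<Rightarrow> reaction set) \<Rightarrow> (nat \<Rightarrow> nat) \<Rightarrow> (nat \<Rightarrow> conf) \<Rightarrow> (nat \<Rightarrow> reaction) \<Rightarrow> nat \<Rightarrow> nat" where
  "rnd \<rho> \<sigma> cs as 0 = 0"
| "rnd \<rho> \<sigma> cs as (Suc i) = tau cs as (\<sigma> (rnd \<rho> \<sigma> cs as i)) (\<rho> (cs (\<sigma> (rnd \<rho> \<sigma> cs as i))))"

definition RT_exec :: "nat set \<Rightarrow> reaction set \<Rightarrow> (nat \<Rightarrow> nat) \<Rightarrow> ((nat \<Rightarrow> nat) \<times> (nat \<Rightarrow> nat)) set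
     \<Rightarrow> real \<Rightarrow> (conf \<Rightarrow> reaction set) \<Rightarrow> (nat \<Rightarrow> nat) \<Rightarrow> (nat \<Rightarrow> conf) \<Rightarrow> (nat \<Rightarrow> reaction) \<Rightarrow> ennreal" where
  "RT_exec S R \<mu> C vol \<rho> \<sigma> cs as =
     (let istar = (LEAST i. stab_step S R \<mu> C cs \<le> rnd \<rho> \<sigma> cs as i) in
      \<Sum>i<istar. TC S R vol (\<rho> (cs (\<sigma> (rnd \<rho> \<sigma> cs as i)))) (cs (\<sigma> (rnd \<rho> \<sigma> cs as i))))"

definition runtime_policy :: "reaction set \<Rightarrow> (conf \<Rightarrow> reaction set) \<Rightarrow> bool" where
  "runtime_policy R \<rho> \<longleftrightarrow> (\<forall>c. \<rho> c \<subseteq> NV R)"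

definition skipping_policy :: "(nat \<Rightarrow> nat) \<Rightarrow> bool" where
  "skipping_policy \<sigma> \<longleftrightarrow> (\<forall>t. t \<le> \<sigma> t)"

(* RT_stab^Pi(n), with the min restricted to policies satisfying P; volume phi n *)
definition RT_stab :: "nat set \<Rightarrow> reaction set \<Rightarrow> (nat \<Rightarrow> nat) \<Rightarrow> ((nat \<Rightarrow> nat) \<times> (nat \<Rightarrow> nat)) set
     \<Rightarrow> (nat \<Rightarrow> real) \<Rightarrow> ((conf \<Rightarrow> reaction set) \<Rightarrow> bool) \<Rightarrow> nat \<Rightarrow> ennreal" where
  "RT_stab S R \<mu> C \<phi> P n =
     (INF \<rho>\<in>{\<rho>. runtime_policy R \<rho> \<and> P \<rho>}.
        SUP x\<in>{(cs, as, \<sigma>). valid_fair_exec S R \<mu> C cs as \<and> size1 S (cs 0) = n \<and> skipping_policy \<sigma>}.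
          (case x of (cs, as, \<sigma>) \<Rightarrow> RT_exec S R \<mu> C (\<phi> n) \<rho> \<sigma> cs as))"

end

(*
  The protocol has a token that moves back and forth between species X and Y (X -> Y, Y -> X) and
  may be retired into the output species W (X -> W), and two leaders L that may merge
  (2L -> L + W).  The correct outcome is "some W has been produced", and it is stable.  Weak
  fairness forces 2L -> L + W to fire, so the protocol is stably correct.

  A runtime policy waiting for {X -> W, 2L -> L + W} needs only one round of expected length
  O(1): whenever the token sits in X, the round ends at the next non-void step with probability
  at least 1/2.  A policy waiting for at most one reaction at a time is defeated by an adversary
  that toggles the token between X and Y: if the policy ever waits for 2L -> L + W, whose
  propensity is 1/vol, that round alone costs vol/2 = Omega(n); otherwise every toggle ends a
  round, and the adversary toggles until the accumulated time exceeds vol/2.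
*)

theory Submission
  imports Defs
begin

section \<open>Expected duration of a round\<close>

lemma apply_rx_void: "applicable c (r, r) \<Longrightarrow> apply_rx c (r, r) = c"
  by (auto simp: apply_rx_def applicable_def fun_eq_iff)

lemma finite_bounded_configs:
  assumes "finite S"
  shows "finite {c. supp_in S c \<and> size1 S c \<le> k}"
proof (rule finite_subset)
  have "c A \<le> size1 S c" if "A \<in> S" for c A
    unfolding size1_def using assms that by (intro member_le_sum) auto
  then show "{c. supp_in S c \<and> size1 S c \<le> k}
      \<subseteq> {c. \<forall>A. (A \<in> S \<longrightarrow> c A \<in> {0..k}) \<and> (A \<notin> S \<longrightarrow> c A = 0)}"
    unfolding supp_in_def by (auto intro: order.trans)
  show "finite {c. \<forall>A. (A \<in> S \<longrightarrow> c A \<in> {0..k}) \<and> (A \<notin> S \<longrightarrow> c A = 0)}"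
    using assms by (intro finite_set_of_finite_funs) auto
qed

lemma propensity_nonneg: "0 < vol \<Longrightarrow> 0 \<le> propensity S R vol c \<alpha>"
  by (simp add: propensity_def prod_nonneg)

lemma propensity_le_total_prop:
  "finite R \<Longrightarrow> \<alpha> \<in> R \<Longrightarrow> 0 < vol \<Longrightarrow> propensity S R vol c \<alpha> \<le> total_prop S R vol c"
  unfolding total_prop_def by (rule member_le_sum) (auto simp: propensity_nonneg)

lemma applicable_if_propensity_nonzero:
  assumes "finite S" "supp_in S (fst \<alpha>)" "propensity S R vol c \<alpha> \<noteq> 0"
  shows "applicable c \<alpha>"
proof -
  have "(\<Prod>A\<in>S. real (c A choose fst \<alpha> A)) \<noteq> 0"
    using assms(3) by (auto simp: propensity_def)
  then have "fst \<alpha> A \<le> c A" if "A \<in> S" for A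
    using assms(1) that by auto
  then show ?thesis
    using assms(2) by (metis applicable_def le0 supp_in_def)
qed

definition round_continues :: "reaction set \<Rightarrow> conf \<Rightarrow> reaction \<Rightarrow> bool" where
  "round_continues Q c \<alpha> \<longleftrightarrow> \<alpha> \<notin> Q \<and> (\<exists>\<beta>\<in>Q. applicable (apply_rx c \<alpha>) \<beta>)"

lemma tc_trunc_Suc:
  "tc_trunc S R vol Q (Suc k) c = ennreal (1 / total_prop S R vol c) +
     (if \<exists>\<beta>\<in>Q. applicable c \<beta> then
        \<Sum>\<alpha>\<in>R. ennreal (propensity S R vol c \<alpha> / total_prop S R vol c) *
           (if round_continues Q c \<alpha> then tc_trunc S R vol Q k (apply_rx c \<alpha>) else 0)
      else 0)"
  by (auto simp: round_continues_def span_def intro!: sum.cong)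

lemma tc_trunc_Suc_le:
  fixes w :: "reaction \<Rightarrow> real"
  assumes vol: "0 < vol" and P: "0 < total_prop S R vol c" and w: "\<And>\<alpha>. \<alpha> \<in> R \<Longrightarrow> 0 \<le> w \<alpha>"
    and next_le: "\<And>\<alpha>. \<alpha> \<in> R \<Longrightarrow> propensity S R vol c \<alpha> \<noteq> 0 \<Longrightarrow> round_continues Q c \<alpha> \<Longrightarrow>
        tc_trunc S R vol Q k (apply_rx c \<alpha>) \<le> ennreal (w \<alpha>)"
  shows "tc_trunc S R vol Q (Suc k) c
    \<le> ennreal ((1 + (\<Sum>\<alpha>\<in>R. propensity S R vol c \<alpha> * w \<alpha>)) / total_prop S R vol c)"
proof -
  define P p where "P = total_prop S R vol c" and "p = propensity S R vol c"
  let ?cont = "\<lambda>\<alpha>. if round_continues Q c \<alpha> then tc_trunc S R vol Q k (apply_rx c \<alpha>) else 0"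
  have p: "0 \<le> p \<alpha>" for \<alpha>
    using vol by (simp add: p_def propensity_nonneg)
  have summand: "ennreal (p \<alpha> / P) * ?cont \<alpha> \<le> ennreal (p \<alpha> / P * w \<alpha>)" if "\<alpha> \<in> R" for \<alpha>
  proof (cases "p \<alpha> \<noteq> 0 \<and> round_continues Q c \<alpha>")
    case True
    then have "ennreal (p \<alpha> / P) * ?cont \<alpha> \<le> ennreal (p \<alpha> / P) * ennreal (w \<alpha>)"
      using next_le[OF that] by (simp add: p_def mult_left_mono)
    also have "\<dots> = ennreal (p \<alpha> / P * w \<alpha>)"
      using p P w that by (intro ennreal_mult[symmetric]) (simp_all add: P_def)
    finally show ?thesis .
  qed auto
  have "(\<Sum>\<alpha>\<in>R. ennreal (p \<alpha> / P) * ?cont \<alpha>) \<le> (\<Sum>\<alpha>\<in>R. ennreal (p \<alpha> / P * w \<alpha>))"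
    by (rule sum_mono) (rule summand)
  also have "\<dots> = ennreal ((\<Sum>\<alpha>\<in>R. p \<alpha> * w \<alpha>) / P)"
    using p P w by (simp add: P_def sum_divide_distrib)
  finally have sum_le: "(\<Sum>\<alpha>\<in>R. ennreal (p \<alpha> / P) * ?cont \<alpha>) \<le> ennreal ((\<Sum>\<alpha>\<in>R. p \<alpha> * w \<alpha>) / P)" .
  have "0 \<le> (\<Sum>\<alpha>\<in>R. p \<alpha> * w \<alpha>)"
    using p w by (simp add: sum_nonneg)
  then have "ennreal (1 / P) + ennreal ((\<Sum>\<alpha>\<in>R. p \<alpha> * w \<alpha>) / P)
      = ennreal ((1 + (\<Sum>\<alpha>\<in>R. p \<alpha> * w \<alpha>)) / P)"
    using P by (simp add: P_def add_divide_distrib)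
  moreover have "tc_trunc S R vol Q (Suc k) c \<le> ennreal (1 / P) + ennreal ((\<Sum>\<alpha>\<in>R. p \<alpha> * w \<alpha>) / P)"
    using sum_le unfolding tc_trunc_Suc P_def[symmetric] p_def[symmetric]
    by (intro add_left_mono) auto
  ultimately show ?thesis
    by (simp add: P_def p_def)
qed

lemma tc_trunc_Suc_ge:
  fixes w :: "reaction \<Rightarrow> real"
  assumes vol: "0 < vol" and P: "0 < total_prop S R vol c" and w: "\<And>\<alpha>. \<alpha> \<in> R \<Longrightarrow> 0 \<le> w \<alpha>"
    and ongoing: "\<exists>\<beta>\<in>Q. applicable c \<beta>"
    and next_ge: "\<And>\<alpha>. \<alpha> \<in> R \<Longrightarrow> propensity S R vol c \<alpha> \<noteq> 0 \<Longrightarrow> w \<alpha> \<noteq> 0 \<Longrightarrow>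
        round_continues Q c \<alpha> \<and> ennreal (w \<alpha>) \<le> tc_trunc S R vol Q k (apply_rx c \<alpha>)"
  shows "ennreal ((1 + (\<Sum>\<alpha>\<in>R. propensity S R vol c \<alpha> * w \<alpha>)) / total_prop S R vol c)
    \<le> tc_trunc S R vol Q (Suc k) c"
proof -
  define P p where "P = total_prop S R vol c" and "p = propensity S R vol c"
  let ?cont = "\<lambda>\<alpha>. if round_continues Q c \<alpha> then tc_trunc S R vol Q k (apply_rx c \<alpha>) else 0"
  have p: "0 \<le> p \<alpha>" for \<alpha>
    using vol by (simp add: p_def propensity_nonneg)
  have summand: "ennreal (p \<alpha> / P * w \<alpha>) \<le> ennreal (p \<alpha> / P) * ?cont \<alpha>" if "\<alpha> \<in> R" for \<alpha>
  proof (cases "p \<alpha> \<noteq> 0 \<and> w \<alpha> \<noteq> 0")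
    case True
    have "ennreal (p \<alpha> / P * w \<alpha>) = ennreal (p \<alpha> / P) * ennreal (w \<alpha>)"
      using p P w that by (intro ennreal_mult) (simp_all add: P_def)
    also have "\<dots> \<le> ennreal (p \<alpha> / P) * ?cont \<alpha>"
      using next_ge[OF that] True by (simp add: p_def mult_left_mono)
    finally show ?thesis .
  qed auto
  have "0 \<le> (\<Sum>\<alpha>\<in>R. p \<alpha> * w \<alpha>)"
    using p w by (simp add: sum_nonneg)
  then have "ennreal ((1 + (\<Sum>\<alpha>\<in>R. p \<alpha> * w \<alpha>)) / P)
      = ennreal (1 / P) + ennreal ((\<Sum>\<alpha>\<in>R. p \<alpha> * w \<alpha>) / P)"
    using P by (simp add: P_def add_divide_distrib)
  also have "ennreal ((\<Sum>\<alpha>\<in>R. p \<alpha> * w \<alpha>) / P) = (\<Sum>\<alpha>\<in>R. ennreal (p \<alpha> / P * w \<alpha>))"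
    using p P w by (simp add: P_def sum_divide_distrib)
  also have "\<dots> \<le> (\<Sum>\<alpha>\<in>R. ennreal (p \<alpha> / P) *
      ?cont \<alpha>)"
    by (rule sum_mono) (rule summand)
  finally show ?thesis
    using ongoing unfolding tc_trunc_Suc P_def[symmetric] p_def[symmetric]
    by (simp add: add_left_mono)
qed

text \<open>The hypothesis says that \<open>f\<close> is a supersolution of the one-step recurrence of \<open>tc_trunc\<close>:
  \<open>f c \<ge> 1 / P + (\<Sum>\<alpha>. p \<alpha> / P * f (apply_rx c \<alpha>))\<close> over the steps that continue the round.\<close>

lemma TC_le_potential:
  fixes f :: "conf \<Rightarrow> real"
  assumes vol: "0 < vol"
    and pos: "\<And>c. c \<in> V \<Longrightarrow> 0 < total_prop S R vol c"
    and potential: "\<And>c. c \<in> V \<Longrightarrow> \<exists>w. (\<forall>\<alpha>\<in>R. 0 \<le> w \<alpha> \<and>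
          (propensity S R vol c \<alpha> \<noteq> 0 \<longrightarrow> round_continues Q c \<alpha> \<longrightarrow>
             apply_rx c \<alpha> \<in> V \<and> f (apply_rx c \<alpha>) \<le> w \<alpha>)) \<and>
        1 + (\<Sum>\<alpha>\<in>R. propensity S R vol c \<alpha> * w \<alpha>) \<le> f c * total_prop S R vol c"
    and "c \<in> V"
  shows "TC S R vol Q c \<le> ennreal (f c)"
proof -
  have "tc_trunc S R vol Q k c \<le> ennreal (f c)" if "c \<in> V" for k c
    using that
  proof (induction k arbitrary: c)
    case (Suc k)
    obtain w where w: "\<forall>\<alpha>\<in>R. 0 \<le> w \<alpha> \<and> (propensity S R vol c \<alpha> \<noteq> 0 \<longrightarrow> round_continues Q c \<alpha> \<longrightarrow>
          apply_rx c \<alpha> \<in> V \<and> f (apply_rx c \<alpha>) \<le> w \<alpha>)"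
      and drop: "1 + (\<Sum>\<alpha>\<in>R. propensity S R vol c \<alpha> * w \<alpha>) \<le> f c * total_prop S R vol c"
      using potential[OF Suc.prems] by blast
    have "tc_trunc S R vol Q (Suc k) c
        \<le> ennreal ((1 + (\<Sum>\<alpha>\<in>R. propensity S R vol c \<alpha> * w \<alpha>)) / total_prop S R vol c)"
    proof (rule tc_trunc_Suc_le[OF vol pos[OF Suc.prems]])
      fix \<alpha> assume "\<alpha> \<in> R" "propensity S R vol c \<alpha> \<noteq> 0" "round_continues Q c \<alpha>"
      then show "tc_trunc S R vol Q k (apply_rx c \<alpha>) \<le> ennreal (w \<alpha>)"
        using w Suc.IH by (meson ennreal_leI order.trans)
    qed (use w in blast)
    also have "\<dots> \<le> ennreal (f c)"
      using drop pos[OF Suc.prems] by (intro ennreal_leI) (simp add: divide_le_eq)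
    finally show ?case .
  qed simp
  then show ?thesis
    unfolding TC_def using \<open>c \<in> V\<close> by (intro SUP_least)
qed

lemma geometric_bound_step:
  fixes pd P Pm :: real
  assumes pd: "0 < pd" and P: "pd \<le> P" "P \<le> Pm"
  shows "(1 - (1 - pd / Pm) ^ Suc k) / pd \<le> (1 + (P - pd) * ((1 - (1 - pd / Pm) ^ k) / pd)) / P"
proof -
  define q where "q = 1 - pd / Pm"
  have q: "0 \<le> q ^ k"
    using pd P by (simp add: q_def field_simps)
  have "(1 - q ^ Suc k) / pd = (1 - q ^ k) / pd + q ^ k / Pm"
    using pd P by (simp add: q_def field_simps)
  also have "\<dots> \<le> (1 - q ^ k) / pd + q ^ k / P"
    using pd P q by (simp add: frac_le)
  also have "\<dots> = (1 + (P - pd) * ((1 - q ^ k) / pd)) / P"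
    using pd P by (simp add: field_simps)
  finally show ?thesis
    by (simp add: q_def)
qed

lemma tc_trunc_ge_geometric:
  assumes vol: "0 < vol" and fin: "finite R" and \<delta>: "\<delta> \<in> R" and pd: "0 < pd"
    and Pm: "\<And>c. c \<in> V \<Longrightarrow> total_prop S R vol c \<le> Pm"
    and prop_\<delta>: "\<And>c. c \<in> V \<Longrightarrow> propensity S R vol c \<delta> = pd"
    and app: "\<And>c. c \<in> V \<Longrightarrow> applicable c \<delta>"
    and closed: "\<And>c \<alpha>. c \<in> V \<Longrightarrow> \<alpha> \<in> R \<Longrightarrow> \<alpha> \<noteq> \<delta> \<Longrightarrow> propensity S R vol c \<alpha> \<noteq> 0 \<Longrightarrow>
        apply_rx c \<alpha> \<in> V"
    and "c \<in> V"
  shows "ennreal ((1 - (1 - pd / Pm) ^ k) / pd) \<le> tc_trunc S R vol {\<delta>} k c"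
  using \<open>c \<in> V\<close>
proof (induction k arbitrary: c)
  case (Suc k)
  define q g where "q = 1 - pd / Pm" and "g = (1 - q ^ k) / pd"
  define P p where "P = total_prop S R vol c" and "p = propensity S R vol c"
  have P: "pd \<le> P" "P \<le> Pm"
    using prop_\<delta>[OF Suc.prems] propensity_le_total_prop[OF fin \<delta> vol] Pm[OF Suc.prems]
    by (auto simp: P_def)
  have "q ^ k \<le> 1"
    using pd P by (intro power_le_one) (auto simp: q_def field_simps)
  then have g: "0 \<le> g"
    using pd by (simp add: g_def)
  define w where "w \<alpha> = (if \<alpha> = \<delta> then 0 else g)" for \<alpha>
  have "(\<Sum>\<alpha>\<in>R. p \<alpha> * w \<alpha>) = (\<Sum>\<alpha>\<in>R - {\<delta>}. p \<alpha>) * g"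
    using fin \<delta> by (simp add: w_def sum.remove sum_distrib_right)
  also have "\<dots> = (P - pd) * g"
    using fin \<delta> prop_\<delta>[OF Suc.prems] by (simp add: P_def p_def total_prop_def sum_diff1)
  finally have sum_w: "(\<Sum>\<alpha>\<in>R. p \<alpha> * w \<alpha>) = (P - pd) * g" .
  have "ennreal ((1 - q ^ Suc k) / pd) \<le> ennreal ((1 + (\<Sum>\<alpha>\<in>R. p \<alpha> * w \<alpha>)) / P)"
    using geometric_bound_step[OF pd P] by (simp add: sum_w q_def g_def ennreal_leI)
  also have "\<dots> \<le> tc_trunc S R vol {\<delta>} (Suc k) c"
    unfolding P_def p_def
  proof (rule tc_trunc_Suc_ge[OF vol])
    show "0 < total_prop S R vol c" "\<exists>\<beta>\<in>{\<delta>}. applicable c \<beta>"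
      using pd P app[OF Suc.prems] by (auto simp: P_def)
    fix \<alpha> assume \<alpha>: "\<alpha> \<in> R" "propensity S R vol c \<alpha> \<noteq> 0" "w \<alpha> \<noteq> 0"
    then have "\<alpha> \<noteq> \<delta>"
      by (auto simp: w_def)
    then have "apply_rx c \<alpha> \<in> V"
      using closed[OF Suc.prems \<alpha>(1)] \<alpha>(2) by blast
    then show "round_continues {\<delta>} c \<alpha> \<and> ennreal (w \<alpha>) \<le> tc_trunc S R vol {\<delta>} k (apply_rx c \<alpha>)"
      using \<alpha> app Suc.IH by (auto simp: round_continues_def w_def g_def q_def)
  qed (use g in \<open>simp add: w_def\<close>)
  finally show ?case
    by (simp add: q_def)
qed simp

lemma TC_ge_inverse_propensity:
  assumes vol: "0 < vol" and fin: "finite R" and \<delta>: "\<delta> \<in> R" and pd: "0 < pd"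
    and "finite V" and "c \<in> V"
    and prop_\<delta>: "\<And>c. c \<in> V \<Longrightarrow> propensity S R vol c \<delta> = pd"
    and app: "\<And>c. c \<in> V \<Longrightarrow> applicable c \<delta>"
    and closed: "\<And>c \<alpha>. c \<in> V \<Longrightarrow> \<alpha> \<in> R \<Longrightarrow> \<alpha> \<noteq> \<delta> \<Longrightarrow> propensity S R vol c \<alpha> \<noteq> 0 \<Longrightarrow>
        apply_rx c \<alpha> \<in> V"
  shows "ennreal (1 / (2 * pd)) \<le> TC S R vol {\<delta>} c"
proof -
  define Pm where "Pm = Max (total_prop S R vol ` V)"
  have Pm: "total_prop S R vol c' \<le> Pm" if "c' \<in> V" for c'
    unfolding Pm_def using \<open>finite V\<close> that by (intro Max_ge) auto
  have "pd \<le> total_prop S R vol c"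
    using prop_\<delta>[OF \<open>c \<in> V\<close>] propensity_le_total_prop[OF fin \<delta> vol] by metis
  then have "pd \<le> Pm"
    using Pm[OF \<open>c \<in> V\<close>] by linarith
  then obtain k where k: "(1 - pd / Pm) ^ k < 1 / 2"
    using pd real_arch_pow_inv[of "1 / 2" "1 - pd / Pm"] by auto
  have "ennreal (1 / (2 * pd)) \<le> ennreal ((1 - (1 - pd / Pm) ^ k) / pd)"
    using k pd by (intro ennreal_leI) (simp add: field_simps)
  also have "\<dots> \<le> tc_trunc S R vol {\<delta>} k c"
    by (rule tc_trunc_ge_geometric[where V = V]) (use assms Pm in auto)
  also have "\<dots> \<le> TC S R vol {\<delta>} c"
    unfolding TC_def by (rule SUP_upper) simp
  finally show ?thesis .
qed

lemma TC_ge_span: "ennreal (span S R vol c) \<le> TC S R vol Q c"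
proof -
  have "ennreal (span S R vol c) \<le> tc_trunc S R vol Q 1 c"
    by simp
  also have "\<dots> \<le> TC S R vol Q c"
    unfolding TC_def by (rule SUP_upper) simp
  finally show ?thesis .
qed

lemma TC_empty_le_span: "TC S R vol {} c \<le> ennreal (span S R vol c)"
proof -
  have "tc_trunc S R vol {} k c \<le> ennreal (span S R vol c)" for k
    by (cases k) simp_all
  then show ?thesis
    unfolding TC_def by (rule SUP_least)
qed

section \<open>Rounds of an execution\<close>

definition round_over :: "(nat \<Rightarrow> conf) \<Rightarrow> (nat \<Rightarrow> reaction) \<Rightarrow> nat \<Rightarrow> reaction set \<Rightarrow> nat \<Rightarrow> bool" where
  "round_over cs as t Q s \<longleftrightarrow>
     t < s \<and> (as (s - 1) \<in> Q \<or> (\<exists>u. t \<le> u \<and> u \<le> s \<and> (\<forall>\<alpha>\<in>Q. \<not> applicable (cs u) \<alpha>)))"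

lemma tau_eq_Least: "tau cs as t Q = (LEAST s. round_over cs as t Q s)"
  by (simp add: tau_def round_over_def)

lemma round_over_tau:
  assumes "round_over cs as t Q s"
  shows "round_over cs as t Q (tau cs as t Q)" and "tau cs as t Q \<le> s"
  using assms unfolding tau_eq_Least by (fact LeastI, fact Least_le)

lemma less_tau:
  assumes "t \<le> u" and "\<forall>\<alpha>\<in>Q. \<not> applicable (cs u) \<alpha>"
  shows "t < tau cs as t Q"
proof -
  have "round_over cs as t Q (Suc u)"
    using assms by (auto simp: round_over_def)
  then show ?thesis
    using round_over_tau(1) round_over_def by blast
qed

lemma tau_eq_Suc:
  assumes "Q \<subseteq> {\<alpha>}"
    and "as t = \<alpha> \<or> \<not> applicable (cs t) \<alpha> \<or> \<not> applicable (cs (Suc t)) \<alpha>"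
  shows "tau cs as t Q = Suc t"
  unfolding tau_eq_Least
proof (rule Least_equality)
  show "round_over cs as t Q (Suc t)"
    using assms unfolding round_over_def by (cases "Q = {}") (auto intro: le_SucI)
qed (simp add: round_over_def)

lemma rnd_ge_index:
  assumes "skipping_policy \<sigma>" and "\<And>t. t < tau cs as t (\<rho> (cs t))"
  shows "i \<le> rnd \<rho> \<sigma> cs as i"
proof (induction i)
  case (Suc i)
  have "rnd \<rho> \<sigma> cs as i \<le> \<sigma> (rnd \<rho> \<sigma> cs as i)"
    using assms(1) by (simp add: skipping_policy_def)
  then show ?case
    using Suc assms(2)[of "\<sigma> (rnd \<rho> \<sigma> cs as i)"] by simp
qed simp

lemma RT_exec_ge_prefix:
  assumes "\<And>i. i < m \<Longrightarrow> rnd \<rho> \<sigma> cs as i < stab_step S R \<mu> C cs"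
    and "stab_step S R \<mu> C cs \<le> rnd \<rho> \<sigma> cs as j"
  shows "(\<Sum>i<m. TC S R vol (\<rho> (cs (\<sigma> (rnd \<rho> \<sigma> cs as i)))) (cs (\<sigma> (rnd \<rho> \<sigma> cs as i))))
    \<le> RT_exec S R \<mu> C vol \<rho> \<sigma> cs as"
proof -
  define istar where "istar = (LEAST i. stab_step S R \<mu> C cs \<le> rnd \<rho> \<sigma> cs as i)"
  have "stab_step S R \<mu> C cs \<le> rnd \<rho> \<sigma> cs as istar"
    unfolding istar_def using assms(2) by (rule LeastI)
  then have "m \<le> istar"
    using assms(1) by (meson not_le)
  then show ?thesis
    unfolding RT_exec_def Let_def istar_def[symmetric] by (intro sum_mono2) auto
qed

lemma RT_exec_le_first_round:
  assumes "stab_step S R \<mu> C cs \<le> rnd \<rho> \<sigma> cs as 1"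
  shows "RT_exec S R \<mu> C vol \<rho> \<sigma> cs as \<le> TC S R vol (\<rho> (cs (\<sigma> 0))) (cs (\<sigma> 0))"
proof -
  define istar where "istar = (LEAST i. stab_step S R \<mu> C cs \<le> rnd \<rho> \<sigma> cs as i)"
  have "istar \<le> 1"
    unfolding istar_def using assms by (rule Least_le)
  then have "RT_exec S R \<mu> C vol \<rho> \<sigma> cs as
      \<le> (\<Sum>i<1. TC S R vol (\<rho> (cs (\<sigma> (rnd \<rho> \<sigma> cs as i)))) (cs (\<sigma> (rnd \<rho> \<sigma> cs as i))))"
    unfolding RT_exec_def Let_def istar_def[symmetric] by (intro sum_mono2) auto
  then show ?thesis
    by simp
qed

lemma weakly_fair_if_eventually_constant:
  assumes "\<And>s. T \<le> s \<Longrightarrow> cs s = c"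
    and "\<And>\<alpha> s. \<alpha> \<in> R \<Longrightarrow> applicable c \<alpha> \<Longrightarrow> \<exists>s'\<ge>s. as s' = \<alpha>"
  shows "weakly_fair R cs as"
  unfolding weakly_fair_def
proof (intro allI ballI impI)
  fix t \<alpha> assume "\<alpha> \<in> R"
  show "\<exists>s\<ge>t. as s = \<alpha> \<or> \<not> applicable (cs s) \<alpha>"
  proof (cases "applicable c \<alpha>")
    case True
    then show ?thesis
      using assms(2)[OF \<open>\<alpha> \<in> R\<close>] by blast
  next
    case False
    then show ?thesis
      using assms(1)[of "max t T"] by (intro exI[of _ "max t T"]) simp
  qed
qed

lemma nth_mod_length_frequently:
  assumes "x \<in> set xs"
  shows "\<exists>s'\<ge>s. xs ! (s' mod length xs) = x"
proof -
  obtain j where j: "j < length xs" "xs ! j = x"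
    using assms by (auto simp: in_set_conv_nth)
  have "s \<le> s * length xs + j"
    using j(1) by (simp add: trans_le_add1)
  moreover have "(s * length xs + j) mod length xs = j"
    using j(1) by simp
  ultimately show ?thesis
    using j(2) by metis
qed

section \<open>The protocol\<close>

abbreviation X :: nat where "X \<equiv> 4"
abbreviation Y :: nat where "Y \<equiv> 5"
abbreviation L :: nat where "L \<equiv> 6"
abbreviation W :: nat where "W \<equiv> 7"

definition species :: "nat set" where
  "species = {X, Y, L, W}"

definition cfg :: "nat \<Rightarrow> nat \<Rightarrow> nat \<Rightarrow> nat \<Rightarrow> conf" where
  "cfg x y l w =
     (\<lambda>A. if A = X then x else if A = Y then y else if A = L then l else if A = W then w else 0)"

definition rx_XY :: reaction where "rx_XY = (cfg 1 0 0 0, cfg 0 1 0 0)"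
definition rx_YX :: reaction where "rx_YX = (cfg 0 1 0 0, cfg 1 0 0 0)"
definition rx_XW :: reaction where "rx_XW = (cfg 1 0 0 0, cfg 0 0 0 1)"
definition rx_LL :: reaction where "rx_LL = (cfg 0 0 2 0, cfg 0 0 1 1)"

definition small_confs :: "conf set" where
  "small_confs = {r. supp_in species r \<and> 1 \<le> size1 species r \<and> size1 species r \<le> 2}"

text \<open>Every reactant vector without a proper reaction gets a void reaction, as the model requires.\<close>

definition reactions :: "reaction set" where
  "reactions = {rx_XY, rx_YX, rx_XW, rx_LL} \<union>
     (\<lambda>r. (r, r)) ` (small_confs - {cfg 1 0 0 0, cfg 0 1 0 0, cfg 0 0 2 0})"

definition target :: "(conf \<times> conf) set" where
  "target = {(x, y). supp_in species x \<and> supp_in species y \<and> x X = 1 \<and> x Y = 0 \<and> x L = 2 \<and> x W < y W}"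

lemma species_mem [simp]: "X \<in> species" "Y \<in> species" "L \<in> species" "W \<in> species"
  by (simp_all add: species_def)

lemma cfg_simps [simp]:
  "cfg x y l w X = x" "cfg x y l w Y = y" "cfg x y l w L = l" "cfg x y l w W = w"
  by (simp_all add: cfg_def)

lemma cfg_eq_iff [simp]: "cfg x y l w = cfg x' y' l' w' \<longleftrightarrow> x = x' \<and> y = y' \<and> l = l' \<and> w = w'"
  by (metis cfg_simps)

lemma size1_species: "size1 species c = c X + c Y + c L + c W"
  by (simp add: size1_def species_def)

lemma prod_species: "(\<Prod>A\<in>species. f A) = f X * f Y * f L * f W"
  by (simp add: species_def mult.assoc)

lemma supp_in_cfg [simp]: "supp_in species (cfg x y l w)"
  by (simp add: supp_in_def cfg_def species_def)

lemma size1_cfg [simp]: "size1 species (cfg x y l w) = x + y + l + w"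
  by (simp add: size1_species)

lemma rx_distinct [simp]:
  "rx_XY \<noteq> rx_YX" "rx_XY \<noteq> rx_XW" "rx_XY \<noteq> rx_LL" "rx_YX \<noteq> rx_XW" "rx_YX \<noteq> rx_LL" "rx_XW \<noteq> rx_LL"
  "rx_YX \<noteq> rx_XY" "rx_XW \<noteq> rx_XY" "rx_LL \<noteq> rx_XY" "rx_XW \<noteq> rx_YX" "rx_LL \<noteq> rx_YX" "rx_LL \<noteq> rx_XW"
  by (simp_all add: rx_XY_def rx_YX_def rx_XW_def rx_LL_def)

lemma rx_in_reactions [simp]: "rx_XY \<in> reactions" "rx_YX \<in> reactions" "rx_XW \<in> reactions" "rx_LL \<in> reactions"
  by (simp_all add: reactions_def)

lemma finite_reactions: "finite reactions"
proof -
  have "small_confs \<subseteq> {c. supp_in species c \<and> size1 species c \<le> 2}"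
    by (auto simp: small_confs_def)
  then have "finite small_confs"
    by (rule finite_subset) (simp add: finite_bounded_configs species_def)
  then show ?thesis
    by (simp add: reactions_def)
qed

lemma NV_reactions: "NV reactions = {rx_XY, rx_YX, rx_XW, rx_LL}"
  by (auto simp: NV_def reactions_def rx_XY_def rx_YX_def rx_XW_def rx_LL_def)

lemma Rof_reactions:
  "Rof reactions (cfg 1 0 0 0) = {rx_XY, rx_XW}"
  "Rof reactions (cfg 0 1 0 0) = {rx_YX}"
  "Rof reactions (cfg 0 0 2 0) = {rx_LL}"
  "r \<in> small_confs - {cfg 1 0 0 0, cfg 0 1 0 0, cfg 0 0 2 0} \<Longrightarrow> Rof reactions r = {(r, r)}"
  by (auto simp: Rof_def reactions_def rx_XY_def rx_YX_def rx_XW_def rx_LL_def)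

lemma crn_reactions: "crn species reactions"
  unfolding crn_def
proof (intro conjI)
  show "finite species" "finite reactions"
    by (simp_all add: species_def finite_reactions)
  show "\<forall>(r, p)\<in>reactions. supp_in species r \<and> supp_in species p \<and> size1 species r \<in> {1, 2} \<and>
      size1 species r \<le> size1 species p"
    by (auto simp: reactions_def small_confs_def rx_XY_def rx_YX_def rx_XW_def rx_LL_def)
  show "\<forall>r. supp_in species r \<and> 1 \<le> size1 species r \<and> size1 species r \<le> 2 \<longrightarrow> Rof reactions r \<noteq> {}"
  proof (intro allI impI)
    fix r assume "supp_in species r \<and> 1 \<le> size1 species r \<and> size1 species r \<le> 2"
    then show "Rof reactions r \<noteq> {}"
      using Rof_reactions by (cases "r \<in> {cfg 1 0 0 0, cfg 0 1 0 0, cfg 0 0 2 0}") (auto simp: small_confs_def)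
  qed
  show "\<forall>(r, p)\<in>reactions. r = p \<longrightarrow> Rof reactions r = {(r, p)}"
    using Rof_reactions(4) by (auto simp: reactions_def rx_XY_def rx_YX_def rx_XW_def rx_LL_def)
qed

lemma applicable_rx:
  "applicable c rx_XY \<longleftrightarrow> 1 \<le> c X" "applicable c rx_YX \<longleftrightarrow> 1 \<le> c Y"
  "applicable c rx_XW \<longleftrightarrow> 1 \<le> c X" "applicable c rx_LL \<longleftrightarrow> 2 \<le> c L"
  by (auto simp: applicable_def rx_XY_def rx_YX_def rx_XW_def rx_LL_def cfg_def)

lemma apply_rx_XY: "apply_rx c rx_XY = c(X := c X - 1, Y := c Y + 1)"
  by (auto simp: fun_eq_iff apply_rx_def rx_XY_def cfg_def)

lemma apply_rx_YX: "apply_rx c rx_YX = c(Y := c Y - 1, X := c X + 1)"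
  by (auto simp: fun_eq_iff apply_rx_def rx_YX_def cfg_def)

lemma apply_rx_XW: "apply_rx c rx_XW = c(X := c X - 1, W := c W + 1)"
  by (auto simp: fun_eq_iff apply_rx_def rx_XW_def cfg_def)

lemma apply_rx_LL: "2 \<le> c L \<Longrightarrow> apply_rx c rx_LL = c(L := c L - 1, W := c W + 1)"
  by (auto simp: fun_eq_iff apply_rx_def rx_LL_def cfg_def)

lemma apply_rx_not_NV:
  assumes "\<alpha> \<in> reactions" "\<alpha> \<notin> NV reactions" "applicable c \<alpha>"
  shows "apply_rx c \<alpha> = c"
proof -
  have "\<alpha> = (fst \<alpha>, fst \<alpha>)"
    using assms(1,2) by (simp add: NV_def prod_eq_iff)
  then show ?thesis
    using assms(3) apply_rx_void by metis
qed

lemma W_le_apply_rx: "\<alpha> \<in> reactions \<Longrightarrow> applicable c \<alpha> \<Longrightarrow> c W \<le> apply_rx c \<alpha> W"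
  by (cases "\<alpha> \<in> NV reactions")
    (auto simp: NV_reactions applicable_rx apply_rx_XY apply_rx_YX apply_rx_XW apply_rx_LL apply_rx_not_NV)

lemma propensity_rx:
  "propensity species reactions vol c rx_XY = c X / 2"
  "propensity species reactions vol c rx_XW = c X / 2"
  "propensity species reactions vol c rx_YX = c Y"
  "propensity species reactions vol c rx_LL = (c L choose 2) / vol"
  using Rof_reactions(1-3)
  by (simp_all add: propensity_def prod_species rx_XY_def rx_YX_def rx_XW_def rx_LL_def)

lemma total_prop_ge_L:
  assumes "0 < vol"
  shows "real (c L) \<le> total_prop species reactions vol c"
proof -
  have void_L: "cfg 0 0 1 0 \<in> small_confs - {cfg 1 0 0 0, cfg 0 1 0 0, cfg 0 0 2 0}"
    by (simp add: small_confs_def)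
  then have "(cfg 0 0 1 0, cfg 0 0 1 0) \<in> reactions"
    by (auto simp: reactions_def)
  moreover have "propensity species reactions vol c (cfg 0 0 1 0, cfg 0 0 1 0) = c L"
    using Rof_reactions(4)[OF void_L] by (simp add: propensity_def prod_species)
  ultimately show ?thesis
    using propensity_le_total_prop[OF finite_reactions _ assms] by metis
qed

lemma L_apply_rx: "\<alpha> \<in> reactions \<Longrightarrow> \<alpha> \<noteq> rx_LL \<Longrightarrow> applicable c \<alpha> \<Longrightarrow> apply_rx c \<alpha> L = c L"
  by (cases "\<alpha> \<in> NV reactions") (auto simp: NV_reactions apply_rx_XY apply_rx_YX apply_rx_XW apply_rx_not_NV)

lemma reactions_applicable_if_propensity:
  "\<alpha> \<in> reactions \<Longrightarrow> propensity species reactions vol c \<alpha> \<noteq> 0 \<Longrightarrow> applicable c \<alpha>"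
  using crn_reactions by (intro applicable_if_propensity_nonzero) (auto simp: crn_def species_def)

lemma apply_rx_reactions:
  assumes "\<alpha> \<in> reactions" "applicable c \<alpha>" "supp_in species c"
  shows "supp_in species (apply_rx c \<alpha>)" "size1 species (apply_rx c \<alpha>) = size1 species c"
  using assms apply_rx_not_NV[OF assms(1) _ assms(2)]
  by (cases "\<alpha> \<in> NV reactions";
      auto simp: NV_reactions applicable_rx apply_rx_XY apply_rx_YX apply_rx_XW apply_rx_LL
        size1_species supp_in_def)+

section \<open>Stable correctness\<close>

definition invariant :: "conf \<Rightarrow> conf \<Rightarrow> bool" where
  "invariant c0 c \<longleftrightarrow> supp_in species c \<and> size1 species c = size1 species c0 \<and> c0 W \<le> c W \<and>
     c X + c Y \<le> 1 \<and> 1 \<le> c L \<and> c L \<le> 2 \<and> (c W = c0 W \<longrightarrow> c L = 2 \<and> c X + c Y = 1)"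

lemma invariant_step:
  assumes "invariant c0 c" "\<alpha> \<in> reactions" "applicable c \<alpha>"
  shows "invariant c0 (apply_rx c \<alpha>)"
proof (cases "\<alpha> \<in> NV reactions")
  case True
  then show ?thesis
    using assms by (auto simp: NV_reactions applicable_rx apply_rx_XY apply_rx_YX apply_rx_XW apply_rx_LL
        invariant_def size1_species supp_in_def)
next
  case False
  then show ?thesis
    using assms apply_rx_not_NV by metis
qed

lemma invariant_reach: "reach reactions c c' \<Longrightarrow> invariant c0 c \<Longrightarrow> invariant c0 c'"
  unfolding reach_def by (induction rule: rtranclp_induct) (auto simp: step_def invariant_step)

lemma W_mono_reach: "reach reactions c c' \<Longrightarrow> c W \<le> c' W"
  unfolding reach_def by (induction rule: rtranclp_induct) (auto simp: step_def dest!: W_le_apply_rx)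

lemma mu_conf_id:
  assumes "supp_in species c"
  shows "mu_conf species id c = c"
proof
  fix u
  have "{A \<in> species. id A = u} = (if u \<in> species then {u} else {})"
    by auto
  then show "mu_conf species id c u = c u"
    using assms by (simp add: mu_conf_def supp_in_def)
qed

lemma valid_init_iff:
  "valid_init species id target c0 \<longleftrightarrow> supp_in species c0 \<and> c0 X = 1 \<and> c0 Y = 0 \<and> c0 L = 2"
proof
  assume "valid_init species id target c0"
  then obtain c where "is_config species c0" "c \<in> Zset species id target c0"
    by (auto simp: valid_init_def)
  then show "supp_in species c0 \<and> c0 X = 1 \<and> c0 Y = 0 \<and> c0 L = 2"
    by (auto simp: Zset_def target_def is_config_def mu_conf_id)
next
  assume c0: "supp_in species c0 \<and> c0 X = 1 \<and> c0 Y = 0 \<and> c0 L = 2"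
  then have "is_config species (c0(W := c0 W + 1))" "is_config species c0"
    by (auto simp: is_config_def supp_in_def size1_species)
  then have "c0(W := c0 W + 1) \<in> Zset species id target c0"
    using c0 by (simp add: Zset_def target_def is_config_def mu_conf_id)
  then show "valid_init species id target c0"
    using \<open>is_config species c0\<close> by (auto simp: valid_init_def)
qed

lemma invariant_init: "valid_init species id target c0 \<Longrightarrow> invariant c0 c0"
  by (simp add: valid_init_iff invariant_def)

lemma Zset_iff:
  assumes "valid_init species id target c0" "invariant c0 c"
  shows "c \<in> Zset species id target c0 \<longleftrightarrow> c0 W < c W"
proof -
  have "supp_in species c0" "c0 X = 1" "c0 Y = 0" "c0 L = 2"
    using assms(1) by (simp_all add: valid_init_iff)
  then show ?thesis
    using assms(2) by (auto simp: invariant_def Zset_def target_def is_config_def mu_conf_id size1_species)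
qed

lemma stab_iff:
  assumes "valid_init species id target c0" "invariant c0 c"
  shows "c \<in> stab reactions (Zset species id target c0) \<longleftrightarrow> c0 W < c W"
proof
  assume "c0 W < c W"
  then have "c' \<in> Zset species id target c0" if "reach reactions c c'" for c'
    using Zset_iff[OF assms(1) invariant_reach[OF that assms(2)]] W_mono_reach[OF that] by simp
  then show "c \<in> stab reactions (Zset species id target c0)"
    by (simp add: stab_def reach_def)
qed (use Zset_iff[OF assms] in \<open>simp add: stab_def\<close>)

lemma crn_protocol_reactions: "crn_protocol species reactions species id target"
proof -
  have "finite_density species reactions id target"
    unfolding finite_density_def
  proof (intro exI allI impI)
    fix c0 c assume "valid_init species id target c0 \<and> reach reactions c0 c"
    then have "invariant c0 c"
      using invariant_init invariant_reach by blast
    then show "real (size1 species c) \<le> 1 * real (size1 species c0)"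
      by (simp add: invariant_def)
  qed
  moreover have "interface species species id target"
    by (auto simp: interface_def target_def)
  ultimately show ?thesis
    by (simp add: crn_protocol_def crn_reactions)
qed

lemma invariant_execution:
  assumes "execution species reactions cs as" "valid_init species id target (cs 0)"
  shows "invariant (cs 0) (cs t)"
  by (induction t) (use assms in \<open>auto simp: execution_def invariant_init invariant_step\<close>)

lemma invariant_valid_exec:
  "valid_fair_exec species reactions id target cs as \<Longrightarrow> invariant (cs 0) (cs t)"
  unfolding valid_fair_exec_def using invariant_execution by blast

lemma stab_step_eq:
  assumes "valid_fair_exec species reactions id target cs as"
  shows "stab_step species reactions id target cs = (LEAST t. cs 0 W < cs t W)"
proof -
  have "execution species reactions cs as" and init: "valid_init species id target (cs 0)"
    using assms by (simp_all add: valid_fair_exec_def)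
  then have "cs t \<in> stab reactions (Zset species id target (cs 0)) \<longleftrightarrow> cs 0 W < cs t W" for t
    using stab_iff[OF init] invariant_execution by blast
  then show ?thesis
    by (simp add: stab_step_def)
qed

lemma stab_step_le:
  assumes "valid_fair_exec species reactions id target cs as" "cs 0 W < cs u W"
  shows "stab_step species reactions id target cs \<le> u"
  using assms by (simp add: stab_step_eq Least_le)

lemma W_unchanged_before_stab_step:
  assumes "valid_fair_exec species reactions id target cs as" "t < stab_step species reactions id target cs"
  shows "cs t W = cs 0 W"
proof -
  have "cs 0 W \<le> cs t W"
    using invariant_valid_exec[OF assms(1)] by (simp add: invariant_def)
  moreover have "\<not> cs 0 W < cs t W"
    using stab_step_le[OF assms(1), of t] assms(2) leD by blast
  ultimately show ?thesis
    by simp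
qed

lemma L_unchanged_without_LL:
  assumes "execution species reactions cs as" "t \<le> s" "\<And>u. t \<le> u \<Longrightarrow> u < s \<Longrightarrow> as u \<noteq> rx_LL"
  shows "cs s L = cs t L"
  using assms(2,3)
proof (induction s rule: dec_induct)
  case (step s)
  then show ?case
    using assms(1) L_apply_rx by (simp add: execution_def)
qed simp

lemma LL_eventually_fires:
  assumes "valid_fair_exec species reactions id target cs as" "2 \<le> cs t L"
  shows "\<exists>s\<ge>t. as s = rx_LL"
proof (rule ccontr)
  assume never: "\<not> (\<exists>s\<ge>t. as s = rx_LL)"
  have "execution species reactions cs as" "weakly_fair reactions cs as"
    using assms(1) by (simp_all add: valid_fair_exec_def)
  moreover have "applicable (cs t) rx_LL"
    using assms(2) by (simp add: applicable_rx)
  ultimately obtain s where "t \<le> s" "\<not> applicable (cs s) rx_LL"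
    using never unfolding weakly_fair_def by fastforce
  moreover have "cs s L = cs t L"
    using L_unchanged_without_LL \<open>execution species reactions cs as\<close> \<open>t \<le> s\<close> never by blast
  ultimately show False
    using assms(2) by (simp add: applicable_rx)
qed

lemma W_Suc_after_XW_LL:
  assumes "execution species reactions cs as" "as s \<in> {rx_XW, rx_LL}"
  shows "cs (Suc s) W = Suc (cs s W)"
proof -
  have "applicable (cs s) (as s)" "cs (Suc s) = apply_rx (cs s) (as s)"
    using assms(1) by (simp_all add: execution_def)
  then show ?thesis
    using assms(2) by (auto simp: applicable_rx apply_rx_XW apply_rx_LL)
qed

lemma stably_correct_reactions: "stably_correct species reactions id target"
  unfolding stably_correct_def
proof (intro allI impI)
  fix cs as assume valid: "valid_fair_exec species reactions id target cs as"
  then have exec: "execution species reactions cs as" and init: "valid_init species id target (cs 0)"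
    by (simp_all add: valid_fair_exec_def)
  then obtain s where "as s = rx_LL"
    using LL_eventually_fires[OF valid, of 0] by (auto simp: valid_init_iff)
  then have "cs 0 W < cs (Suc s) W"
    using W_Suc_after_XW_LL[OF exec] invariant_execution[OF exec init, of s] by (simp add: invariant_def)
  then show "\<exists>t. cs t \<in> stab reactions (Zset species id target (cs 0))"
    using stab_iff[OF init invariant_execution[OF exec init]] by blast
qed

section \<open>A runtime policy with constant expected runtime\<close>

definition fast_policy :: "conf \<Rightarrow> reaction set" where
  "fast_policy c = (if c L = 2 \<and> c X + c Y = 1 then {rx_XW, rx_LL} else {})"

text \<open>A potential for the expected duration of a round waiting for \<open>{rx_XW, rx_LL}\<close>: from \<open>X\<close> every
  non-void step ends the round with probability at least \<open>1/2\<close>, from \<open>Y\<close> the token first has to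
  return to \<open>X\<close>.\<close>

definition token_confs :: "conf set" where
  "token_confs = {c. supp_in species c \<and> c L = 2 \<and> c X + c Y = 1}"

definition token_potential :: "conf \<Rightarrow> real" where
  "token_potential c = (if c X = 1 then 3 else 4)"

definition token_weight :: "conf \<Rightarrow> reaction \<Rightarrow> real" where
  "token_weight c \<alpha> = (if \<alpha> \<in> {rx_XW, rx_LL} then 0 else if \<alpha> = rx_XY then 4
     else if \<alpha> = rx_YX then 3 else token_potential c)"

lemma token_weight_sum_le:
  assumes vol: "0 < vol" and c: "c \<in> token_confs"
  shows "1 + (\<Sum>\<alpha>\<in>reactions. propensity species reactions vol c \<alpha> * token_weight c \<alpha>)
    \<le> token_potential c * total_prop species reactions vol c"
proof -
  define P p w where "P = total_prop species reactions vol c" and "p = propensity species reactions vol c"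
    and "w = token_weight c"
  have "(\<Sum>\<alpha>\<in>reactions. p \<alpha> * w \<alpha>)
      = (\<Sum>\<alpha>\<in>reactions - NV reactions. p \<alpha> * w \<alpha>) + (\<Sum>\<alpha>\<in>NV reactions. p \<alpha> * w \<alpha>)"
    using finite_reactions by (intro sum.subset_diff) (auto simp: NV_def)
  also have "(\<Sum>\<alpha>\<in>reactions - NV reactions. p \<alpha> * w \<alpha>) = token_potential c * (P - sum p (NV reactions))"
    using finite_reactions
    by (simp add: NV_reactions w_def token_weight_def P_def p_def total_prop_def sum_diff
        sum_distrib_left[symmetric] mult.commute)
  finally have "(\<Sum>\<alpha>\<in>reactions. p \<alpha> * w \<alpha>)
      = 4 * p rx_XY + 3 * p rx_YX + token_potential c * (P - (p rx_XY + p rx_YX + p rx_XW + p rx_LL))"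
    by (simp add: NV_reactions w_def token_weight_def)
  moreover have "p rx_LL = 1 / vol"
    using c by (simp add: token_confs_def p_def propensity_rx)
  moreover have "c X = 1 \<and> c Y = 0 \<or> c X = 0 \<and> c Y = 1"
    using c by (simp add: token_confs_def) arith
  ultimately show ?thesis
    using vol by (auto simp: P_def p_def w_def propensity_rx token_potential_def)
qed

lemma token_weight_next:
  assumes c: "c \<in> token_confs" and \<alpha>: "\<alpha> \<in> reactions"
    and "propensity species reactions vol c \<alpha> \<noteq> 0" "round_continues {rx_XW, rx_LL} c \<alpha>"
  shows "apply_rx c \<alpha> \<in> token_confs \<and> token_potential (apply_rx c \<alpha>) \<le> token_weight c \<alpha>"
proof -
  have "applicable c \<alpha>" "\<alpha> \<notin> {rx_XW, rx_LL}"
    using assms reactions_applicable_if_propensity by (auto simp: round_continues_def)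
  then show ?thesis
    using c \<alpha> apply_rx_not_NV[OF \<alpha>] by (cases "\<alpha> \<in> NV reactions")
      (auto simp: NV_reactions applicable_rx apply_rx_XY apply_rx_YX token_confs_def token_potential_def
        token_weight_def supp_in_def)
qed

lemma TC_fast_round_le:
  assumes vol: "0 < vol" and c: "c \<in> token_confs"
  shows "TC species reactions vol {rx_XW, rx_LL} c \<le> 4"
proof -
  have "TC species reactions vol {rx_XW, rx_LL} c \<le> ennreal (token_potential c)"
  proof (rule TC_le_potential[OF vol _ _ c])
    show "0 < total_prop species reactions vol c" if "c \<in> token_confs" for c
      using total_prop_ge_L[OF vol, of c] that by (simp add: token_confs_def)
    fix c assume "c \<in> token_confs"
    then show "\<exists>w. (\<forall>\<alpha>\<in>reactions. 0 \<le> w \<alpha> \<and>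
          (propensity species reactions vol c \<alpha> \<noteq> 0 \<longrightarrow> round_continues {rx_XW, rx_LL} c \<alpha> \<longrightarrow>
             apply_rx c \<alpha> \<in> token_confs \<and> token_potential (apply_rx c \<alpha>) \<le> w \<alpha>)) \<and>
        1 + (\<Sum>\<alpha>\<in>reactions. propensity species reactions vol c \<alpha> * w \<alpha>)
          \<le> token_potential c * total_prop species reactions vol c"
      using token_weight_sum_le[OF vol] token_weight_next
      by (intro exI[of _ "token_weight c"]) (auto simp: token_weight_def token_potential_def)
  qed
  also have "\<dots> \<le> 4"
    by (simp add: token_potential_def)
  finally show ?thesis .
qed

lemma TC_fast_policy_le:
  assumes vol: "0 < vol" and c: "supp_in species c" "1 \<le> c L"
  shows "TC species reactions vol (fast_policy c) c \<le> 4"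
proof (cases "c L = 2 \<and> c X + c Y = 1")
  case True
  then show ?thesis
    using TC_fast_round_le[OF vol] c(1) by (simp add: fast_policy_def token_confs_def)
next
  case False
  have "1 \<le> total_prop species reactions vol c"
    using total_prop_ge_L[OF vol, of c] c(2) by linarith
  then have "span species reactions vol c \<le> 1"
    by (simp add: span_def)
  then have "ennreal (span species reactions vol c) \<le> 4"
    using ennreal_leI[of _ 4] by simp
  moreover have "fast_policy c = {}"
    using False by (simp add: fast_policy_def)
  ultimately show ?thesis
    using TC_empty_le_span order.trans by metis
qed

lemma fast_round_over:
  assumes "valid_fair_exec species reactions id target cs as"
  shows "\<exists>s. round_over cs as t (fast_policy (cs t)) s"
proof (cases "fast_policy (cs t) = {}")
  case True
  then have "round_over cs as t (fast_policy (cs t)) (Suc t)"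
    by (auto simp: round_over_def)
  then show ?thesis ..
next
  case False
  then have "fast_policy (cs t) = {rx_XW, rx_LL}" "cs t L = 2"
    by (simp_all add: fast_policy_def split: if_splits)
  moreover obtain s where "t \<le> s" "as s = rx_LL"
    using LL_eventually_fires[OF assms, of t] \<open>cs t L = 2\<close> by auto
  ultimately have "round_over cs as t (fast_policy (cs t)) (Suc s)"
    by (simp add: round_over_def)
  then show ?thesis ..
qed

lemma stab_step_le_fast_round_end:
  assumes valid: "valid_fair_exec species reactions id target cs as"
  shows "stab_step species reactions id target cs \<le> tau cs as t (fast_policy (cs t))"
proof -
  define ts s Q where "ts = stab_step species reactions id target cs"
    and "s = tau cs as t (fast_policy (cs t))" and "Q = fast_policy (cs t)"
  have exec: "execution species reactions cs as"
    using valid by (simp add: valid_fair_exec_def)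
  have inv: "invariant (cs 0) (cs u)" for u
    using valid by (rule invariant_valid_exec)
  obtain s' where "round_over cs as t Q s'"
    using fast_round_over[OF valid] by (auto simp: Q_def)
  then have over: "round_over cs as t Q s"
    unfolding s_def Q_def by (rule round_over_tau(1))
  show ?thesis
  proof (cases "t < ts")
    case True
    then have "Q = {rx_XW, rx_LL}"
      using W_unchanged_before_stab_step[OF valid True[unfolded ts_def]] inv[of t]
      by (simp add: Q_def fast_policy_def invariant_def)
    with over consider "as (s - 1) \<in> {rx_XW, rx_LL}"
      | u where "u \<le> s" "\<not> applicable (cs u) rx_LL"
      by (auto simp: round_over_def)
    then show ?thesis
    proof cases
      case 1
      have "Suc (s - 1) = s"
        using over by (simp add: round_over_def)
      then have "cs 0 W < cs s W"
        using W_Suc_after_XW_LL[OF exec 1] inv[of "s - 1"] by (simp add: invariant_def)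
      then show ?thesis
        using stab_step_le[OF valid] by (simp add: s_def)
    next
      case 2
      then have "cs 0 W < cs u W"
        using inv[of u] by (auto simp: invariant_def applicable_rx)
      then have "ts \<le> u"
        unfolding ts_def by (rule stab_step_le[OF valid])
      then show ?thesis
        using \<open>u \<le> s\<close> by (simp add: ts_def s_def)
    qed
  next
    case False
    then show ?thesis
      using over by (simp add: round_over_def ts_def s_def Q_def)
  qed
qed

lemma RT_exec_fast_policy_le:
  assumes valid: "valid_fair_exec species reactions id target cs as" and vol: "0 < vol"
  shows "RT_exec species reactions id target vol fast_policy \<sigma> cs as \<le> 4"
proof -
  have "RT_exec species reactions id target vol fast_policy \<sigma> cs as
      \<le> TC species reactions vol (fast_policy (cs (\<sigma> 0))) (cs (\<sigma> 0))"
    using stab_step_le_fast_round_end[OF valid] by (intro RT_exec_le_first_round) simp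
  also have "\<dots> \<le> 4"
    using invariant_valid_exec[OF valid] TC_fast_policy_le[OF vol] by (simp add: invariant_def)
  finally show ?thesis .
qed

lemma RT_stab_le_4:
  assumes "0 < \<phi> n"
  shows "RT_stab species reactions id target \<phi> (\<lambda>_. True) n \<le> 4"
  unfolding RT_stab_def
proof (rule INF_lower2)
  show "fast_policy \<in> {\<rho>. runtime_policy reactions \<rho> \<and> True}"
    by (simp add: runtime_policy_def fast_policy_def NV_reactions)
qed (use RT_exec_fast_policy_le assms in \<open>auto intro: SUP_least\<close>)

lemma RT_stab_le_ln:
  assumes "\<forall>n. 0 < \<phi> n"
  shows "\<forall>n\<ge>3. RT_stab species reactions id target \<phi> (\<lambda>_. True) n \<le> ennreal (4 * ln (real n))"
proof (intro allI impI)
  fix n :: nat assume "3 \<le> n"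
  then have "exp 1 \<le> real n"
    using exp_le by linarith
  then have "1 \<le> ln (real n)"
    using \<open>3 \<le> n\<close> by (subst ln_ge_iff) auto
  then have "4 \<le> ennreal (4 * ln (real n))"
    using ennreal_leI[of 4 "4 * ln (real n)"] by simp
  then show "RT_stab species reactions id target \<phi> (\<lambda>_. True) n \<le> ennreal (4 * ln (real n))"
    using RT_stab_le_4 assms order.trans by blast
qed

section \<open>Policies waiting for a single reaction\<close>

lemma TC_LL_ge:
  assumes vol: "0 < vol" and c: "supp_in species c" "c L = 2"
  shows "ennreal (vol / 2) \<le> TC species reactions vol {rx_LL} c"
proof -
  define V where "V = {c'. supp_in species c' \<and> c' L = 2 \<and> size1 species c' = size1 species c}"
  have "V \<subseteq> {c'. supp_in species c' \<and> size1 species c' \<le> size1 species c}"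
    by (auto simp: V_def)
  then have "finite V"
    by (rule finite_subset) (simp add: finite_bounded_configs species_def)
  have "ennreal (1 / (2 * (1 / vol))) \<le> TC species reactions vol {rx_LL} c"
  proof (rule TC_ge_inverse_propensity[OF vol finite_reactions _ _ \<open>finite V\<close>])
    show "c \<in> V"
      using c by (simp add: V_def)
    show "propensity species reactions vol c' rx_LL = 1 / vol" "applicable c' rx_LL" if "c' \<in> V" for c'
      using that by (simp_all add: V_def propensity_rx applicable_rx)
    show "apply_rx c' \<alpha> \<in> V"
      if "c' \<in> V" "\<alpha> \<in> reactions" "\<alpha> \<noteq> rx_LL" "propensity species reactions vol c' \<alpha> \<noteq> 0" for c' \<alpha>
    proof -
      have "applicable c' \<alpha>"
        using reactions_applicable_if_propensity that(2,4) .
      then show ?thesis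
        using L_apply_rx[OF that(2,3)] apply_rx_reactions[OF that(2)] that(1) by (simp add: V_def)
    qed
  qed (use vol in simp_all)
  then show ?thesis
    by simp
qed

definition conf_X :: "nat \<Rightarrow> conf" where "conf_X n = cfg 1 0 2 (n - 3)"
definition conf_Y :: "nat \<Rightarrow> conf" where "conf_Y n = cfg 0 1 2 (n - 3)"
definition conf_W :: "nat \<Rightarrow> conf" where "conf_W n = cfg 0 0 2 (n - 2)"
definition conf_end :: "nat \<Rightarrow> conf" where "conf_end n = cfg 0 0 1 (n - 1)"

lemma conf_end_inert:
  assumes "\<alpha> \<in> reactions" "applicable (conf_end n) \<alpha>"
  shows "\<alpha> \<notin> NV reactions" "apply_rx (conf_end n) \<alpha> = conf_end n"
proof -
  show "\<alpha> \<notin> NV reactions"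
    using assms(2) by (auto simp: NV_reactions applicable_rx conf_end_def)
  then show "apply_rx (conf_end n) \<alpha> = conf_end n"
    using apply_rx_not_NV assms by blast
qed

text \<open>Cycling through the reactions applicable in \<open>conf_end n\<close>, all of them void, makes the
  adversarial execution below weakly fair.\<close>

definition void_cycle :: "nat \<Rightarrow> reaction list" where
  "void_cycle n = (SOME xs. set xs = {\<alpha> \<in> reactions. applicable (conf_end n) \<alpha>})"

lemma set_void_cycle: "set (void_cycle n) = {\<alpha> \<in> reactions. applicable (conf_end n) \<alpha>}"
proof -
  have "\<exists>xs. set xs = {\<alpha> \<in> reactions. applicable (conf_end n) \<alpha>}"
    using finite_reactions by (intro finite_list) simp
  then show ?thesis
    unfolding void_cycle_def by (rule someI_ex)
qed

lemma void_cycle_nonempty: "0 < length (void_cycle n)"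
proof -
  have "cfg 0 0 1 0 \<in> small_confs - {cfg 1 0 0 0, cfg 0 1 0 0, cfg 0 0 2 0}"
    by (simp add: small_confs_def)
  then have "(cfg 0 0 1 0, cfg 0 0 1 0) \<in> set (void_cycle n)"
    by (auto simp: set_void_cycle reactions_def applicable_def conf_end_def cfg_def)
  then show ?thesis
    by (cases "void_cycle n") auto
qed

definition adv_conf :: "nat \<Rightarrow> nat \<Rightarrow> nat \<Rightarrow> conf" where
  "adv_conf n M t = (if t \<le> 2 * M then (if even t then conf_X n else conf_Y n)
     else if t = 2 * M + 1 then conf_W n else conf_end n)"

definition adv_rx :: "nat \<Rightarrow> nat \<Rightarrow> nat \<Rightarrow> reaction" where
  "adv_rx n M t = (if t < 2 * M then (if even t then rx_XY else rx_YX)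
     else if t = 2 * M then rx_XW else if t = 2 * M + 1 then rx_LL
     else void_cycle n ! (t mod length (void_cycle n)))"

lemma adv_step:
  assumes "3 \<le> n"
  shows "adv_rx n M t \<in> reactions \<and> applicable (adv_conf n M t) (adv_rx n M t) \<and>
    adv_conf n M (Suc t) = apply_rx (adv_conf n M t) (adv_rx n M t)"
proof -
  consider "t < 2 * M" | "t = 2 * M" | "t = 2 * M + 1" | "2 * M + 1 < t"
    by linarith
  then show ?thesis
  proof cases
    case 1
    then show ?thesis
      using assms by (auto simp: adv_conf_def adv_rx_def conf_X_def conf_Y_def applicable_rx apply_rx_XY
          apply_rx_YX fun_eq_iff cfg_def)
  next
    case 2
    then show ?thesis
      using assms by (auto simp: adv_conf_def adv_rx_def conf_X_def conf_W_def applicable_rx apply_rx_XW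
          fun_eq_iff cfg_def)
  next
    case 3
    then show ?thesis
      using assms by (auto simp: adv_conf_def adv_rx_def conf_W_def conf_end_def applicable_rx apply_rx_LL
          fun_eq_iff cfg_def)
  next
    case 4
    then have "adv_rx n M t \<in> set (void_cycle n)"
      using void_cycle_nonempty by (simp add: adv_rx_def)
    then show ?thesis
      using 4 conf_end_inert(2) by (auto simp: set_void_cycle adv_conf_def)
  qed
qed

lemma valid_adv:
  assumes "3 \<le> n"
  shows "valid_fair_exec species reactions id target (adv_conf n M) (adv_rx n M)"
    and "size1 species (adv_conf n M 0) = n"
proof -
  have "execution species reactions (adv_conf n M) (adv_rx n M)"
    using assms adv_step by (simp add: execution_def is_config_def adv_conf_def conf_X_def)
  moreover have "weakly_fair reactions (adv_conf n M) (adv_rx n M)"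
  proof (rule weakly_fair_if_eventually_constant)
    show "adv_conf n M s = conf_end n" if "2 * M + 2 \<le> s" for s
      using that by (simp add: adv_conf_def)
    fix \<alpha> s assume "\<alpha> \<in> reactions" "applicable (conf_end n) \<alpha>"
    then have "\<alpha> \<in> set (void_cycle n)"
      by (simp add: set_void_cycle)
    then obtain s' where "max s (2 * M + 2) \<le> s'" "void_cycle n ! (s' mod length (void_cycle n)) = \<alpha>"
      by (meson nth_mod_length_frequently)
    then show "\<exists>s'\<ge>s. adv_rx n M s' = \<alpha>"
      by (intro exI[of _ s']) (simp add: adv_rx_def)
  qed
  moreover have "valid_init species id target (adv_conf n M 0)"
    by (simp add: valid_init_iff adv_conf_def conf_X_def)
  ultimately show "valid_fair_exec species reactions id target (adv_conf n M) (adv_rx n M)"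
    by (simp add: valid_fair_exec_def)
  show "size1 species (adv_conf n M 0) = n"
    using assms by (simp add: adv_conf_def conf_X_def)
qed

lemma stab_step_adv:
  assumes "3 \<le> n"
  shows "stab_step species reactions id target (adv_conf n M) = 2 * M + 1"
  unfolding stab_step_eq[OF valid_adv(1)[OF assms]]
proof (rule Least_equality)
  show "adv_conf n M 0 W < adv_conf n M (2 * M + 1) W"
    using assms by (simp add: adv_conf_def conf_X_def conf_W_def)
  show "2 * M + 1 \<le> t" if "adv_conf n M 0 W < adv_conf n M t W" for t
    using that by (cases "t \<le> 2 * M") (auto simp: adv_conf_def conf_X_def conf_Y_def split: if_splits)
qed

lemma less_tau_adv:
  assumes "Q \<subseteq> NV reactions"
  shows "t < tau (adv_conf n M) (adv_rx n M) t Q"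
proof (rule less_tau)
  show "t \<le> max t (2 * M + 2)"
    by simp
  show "\<forall>\<alpha>\<in>Q. \<not> applicable (adv_conf n M (max t (2 * M + 2))) \<alpha>"
    using assms conf_end_inert(1) by (auto simp: adv_conf_def NV_def)
qed

lemma rnd_adv_ge_index:
  assumes "runtime_policy reactions \<rho>" "skipping_policy \<sigma>"
  shows "i \<le> rnd \<rho> \<sigma> (adv_conf n M) (adv_rx n M) i"
  using assms less_tau_adv by (intro rnd_ge_index) (auto simp: runtime_policy_def)

lemma RT_exec_adv_ge_first_round:
  assumes "3 \<le> n" "runtime_policy reactions \<rho>" "skipping_policy \<sigma>"
  shows "TC species reactions vol (\<rho> (adv_conf n M (\<sigma> 0))) (adv_conf n M (\<sigma> 0))
    \<le> RT_exec species reactions id target vol \<rho> \<sigma> (adv_conf n M) (adv_rx n M)"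
proof -
  have "(\<Sum>i<1. TC species reactions vol (\<rho> (adv_conf n M (\<sigma> (rnd \<rho> \<sigma> (adv_conf n M) (adv_rx n M) i))))
      (adv_conf n M (\<sigma> (rnd \<rho> \<sigma> (adv_conf n M) (adv_rx n M) i))))
    \<le> RT_exec species reactions id target vol \<rho> \<sigma> (adv_conf n M) (adv_rx n M)"
  proof (rule RT_exec_ge_prefix[where j = "2 * M + 1" and \<mu> = id])
    show "stab_step species reactions id target (adv_conf n M) \<le> rnd \<rho> \<sigma> (adv_conf n M) (adv_rx n M) (2 * M + 1)"
      unfolding stab_step_adv[OF assms(1)] by (rule rnd_adv_ge_index[OF assms(2,3)])
  qed (simp add: stab_step_adv[OF assms(1)])
  then show ?thesis
    by simp
qed

lemma policy_singleton_not_LL: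
  assumes "Q \<subseteq> NV reactions" "card Q \<le> 1" "Q \<noteq> {rx_LL}"
  obtains \<alpha> where "\<alpha> \<in> {rx_XY, rx_YX, rx_XW}" "Q \<subseteq> {\<alpha>}"
proof -
  have "finite Q"
    using assms(1) finite_subset by (auto simp: NV_reactions)
  then consider "Q = {}" | \<beta> where "Q = {\<beta>}"
    using assms(2) by (metis card_0_eq card_1_singletonE le_eq_less_or_eq less_one)
  then show ?thesis
  proof cases
    case 1
    then show ?thesis
      using that[of rx_XY] by simp
  next
    case (2 \<beta>)
    then have "\<beta> \<in> {rx_XY, rx_YX, rx_XW}"
      using assms(1,3) by (auto simp: NV_reactions)
    then show ?thesis
      using that 2 by blast
  qed
qed

lemma adv_toggle_ends_round:
  assumes "t < 2 * M" "\<alpha> \<in> {rx_XY, rx_YX, rx_XW}"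
  shows "adv_rx n M t = \<alpha> \<or> \<not> applicable (adv_conf n M t) \<alpha> \<or> \<not> applicable (adv_conf n M (Suc t)) \<alpha>"
  using assms by (auto simp: adv_conf_def adv_rx_def conf_X_def conf_Y_def applicable_rx)

lemma RT_exec_adv_ge_toggles:
  assumes n: "3 \<le> n" and \<rho>: "runtime_policy reactions \<rho>" "\<forall>c. card (\<rho> c) \<le> 1"
    and not_LL: "\<rho> (conf_X n) \<noteq> {rx_LL}" "\<rho> (conf_Y n) \<noteq> {rx_LL}"
  shows "(\<Sum>i<2 * M. TC species reactions vol (\<rho> (adv_conf n M i)) (adv_conf n M i))
    \<le> RT_exec species reactions id target vol \<rho> id (adv_conf n M) (adv_rx n M)"
proof -
  have round: "tau (adv_conf n M) (adv_rx n M) t (\<rho> (adv_conf n M t)) = Suc t" if "t < 2 * M" for t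
  proof -
    have "\<rho> (adv_conf n M t) \<noteq> {rx_LL}"
      using not_LL that by (simp add: adv_conf_def)
    then obtain \<alpha> where \<alpha>: "\<alpha> \<in> {rx_XY, rx_YX, rx_XW}" and sub: "\<rho> (adv_conf n M t) \<subseteq> {\<alpha>}"
      using \<rho> policy_singleton_not_LL by (metis runtime_policy_def)
    show ?thesis
      using adv_toggle_ends_round[OF that \<alpha>] by (rule tau_eq_Suc[OF sub])
  qed
  have rnd: "rnd \<rho> id (adv_conf n M) (adv_rx n M) i = i" if "i \<le> 2 * M" for i
    using that by (induction i) (simp_all add: round)
  have "(\<Sum>i<2 * M. TC species reactions vol (\<rho> (adv_conf n M i)) (adv_conf n M i))
      = (\<Sum>i<2 * M. TC species reactions vol (\<rho> (adv_conf n M (id (rnd \<rho> id (adv_conf n M) (adv_rx n M) i))))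
          (adv_conf n M (id (rnd \<rho> id (adv_conf n M) (adv_rx n M) i))))"
    using rnd by (intro sum.cong) simp_all
  also have "\<dots> \<le> RT_exec species reactions id target vol \<rho> id (adv_conf n M) (adv_rx n M)"
  proof (rule RT_exec_ge_prefix[where j = "2 * M + 1" and \<mu> = id and \<sigma> = id])
    show "stab_step species reactions id target (adv_conf n M) \<le> rnd \<rho> id (adv_conf n M) (adv_rx n M) (2 * M + 1)"
      unfolding stab_step_adv[OF n] by (rule rnd_adv_ge_index[OF \<rho>(1)]) (simp add: skipping_policy_def)
  qed (simp add: stab_step_adv[OF n] rnd)
  finally show ?thesis .
qed

lemma RT_exec_adv_ge_if_waiting_for_LL:
  assumes n: "3 \<le> n" and vol: "0 < vol" and \<rho>: "runtime_policy reactions \<rho>"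
    and waits: "\<rho> (conf_X n) = {rx_LL} \<or> \<rho> (conf_Y n) = {rx_LL}"
  obtains \<sigma> where "skipping_policy \<sigma>"
    "ennreal (vol / 2) \<le> RT_exec species reactions id target vol \<rho> \<sigma> (adv_conf n 1) (adv_rx n 1)"
proof -
  \<comment> \<open>the adversary starts the first round in \<open>conf_Y n\<close> (step 1) unless \<open>\<rho>\<close> already waits for
    \<open>rx_LL\<close> in \<open>conf_X n\<close>\<close>
  define \<sigma> :: "nat \<Rightarrow> nat" where "\<sigma> t = (if t = 0 \<and> \<rho> (conf_X n) \<noteq> {rx_LL} then 1 else t)" for t
  have \<sigma>: "skipping_policy \<sigma>"
    by (simp add: skipping_policy_def \<sigma>_def)
  have first: "adv_conf n 1 (\<sigma> 0) \<in> {conf_X n, conf_Y n}" "\<rho> (adv_conf n 1 (\<sigma> 0)) = {rx_LL}"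
    using waits by (auto simp: \<sigma>_def adv_conf_def)
  then have "ennreal (vol / 2) \<le> TC species reactions vol {rx_LL} (adv_conf n 1 (\<sigma> 0))"
    using TC_LL_ge[OF vol] by (auto simp: conf_X_def conf_Y_def)
  also have "\<dots> \<le> RT_exec species reactions id target vol \<rho> \<sigma> (adv_conf n 1) (adv_rx n 1)"
    using RT_exec_adv_ge_first_round[OF n \<rho> \<sigma>, of vol 1] first(2) by simp
  finally show ?thesis
    using \<sigma> that by blast
qed

lemma RT_exec_adv_ge_if_not_waiting_for_LL:
  assumes n: "3 \<le> n" and vol: "0 < vol" and \<rho>: "runtime_policy reactions \<rho>" "\<forall>c. card (\<rho> c) \<le> 1"
    and not_LL: "\<rho> (conf_X n) \<noteq> {rx_LL}" "\<rho> (conf_Y n) \<noteq> {rx_LL}"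
  obtains M where "ennreal (vol / 2) \<le> RT_exec species reactions id target vol \<rho> id (adv_conf n M) (adv_rx n M)"
proof -
  define m where "m = min (span species reactions vol (conf_X n)) (span species reactions vol (conf_Y n))"
  have "2 \<le> total_prop species reactions vol (conf_X n)" "2 \<le> total_prop species reactions vol (conf_Y n)"
    using total_prop_ge_L[OF vol, of "conf_X n"] total_prop_ge_L[OF vol, of "conf_Y n"]
    by (simp_all add: conf_X_def conf_Y_def)
  then have "0 < m"
    by (simp add: m_def span_def)
  obtain M :: nat where "vol / m < M"
    using reals_Archimedean2 by blast
  then have "ennreal (vol / 2) \<le> ennreal (real (2 * M) * m)"
    using \<open>0 < m\<close> vol by (intro ennreal_leI) (simp add: field_simps)
  also have "\<dots> = (\<Sum>i<2 * M. ennreal m)"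
    using \<open>0 < m\<close> by (simp add: ennreal_mult ennreal_of_nat_eq_real_of_nat)
  also have "\<dots> \<le> (\<Sum>i<2 * M. TC species reactions vol (\<rho> (adv_conf n M i)) (adv_conf n M i))"
  proof (rule sum_mono)
    fix i assume "i \<in> {..<2 * M}"
    then have "m \<le> span species reactions vol (adv_conf n M i)"
      by (simp add: adv_conf_def m_def)
    then show "ennreal m \<le> TC species reactions vol (\<rho> (adv_conf n M i)) (adv_conf n M i)"
      using TC_ge_span ennreal_leI order.trans by metis
  qed
  also have "\<dots> \<le> RT_exec species reactions id target vol \<rho> id (adv_conf n M) (adv_rx n M)"
    by (rule RT_exec_adv_ge_toggles[OF n \<rho> not_LL])
  finally show ?thesis
    by (rule that)
qed

lemma SUP_RT_exec_ge:
  assumes n: "3 \<le> n" and vol: "0 < vol" and \<rho>: "runtime_policy reactions \<rho>" "\<forall>c. card (\<rho> c) \<le> 1"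
  shows "ennreal (vol / 2) \<le> (SUP x\<in>{(cs, as, \<sigma>). valid_fair_exec species reactions id target cs as \<and>
      size1 species (cs 0) = n \<and> skipping_policy \<sigma>}.
    (case x of (cs, as, \<sigma>) \<Rightarrow> RT_exec species reactions id target vol \<rho> \<sigma> cs as))"
proof -
  obtain M \<sigma> where "skipping_policy \<sigma>"
    "ennreal (vol / 2) \<le> RT_exec species reactions id target vol \<rho> \<sigma> (adv_conf n M) (adv_rx n M)"
  proof (cases "\<rho> (conf_X n) = {rx_LL} \<or> \<rho> (conf_Y n) = {rx_LL}")
    case True
    then show ?thesis
      using RT_exec_adv_ge_if_waiting_for_LL[OF n vol \<rho>(1)] that by metis
  next
    case False
    moreover have "skipping_policy id"
      by (simp add: skipping_policy_def)
    ultimately show ?thesis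
      using RT_exec_adv_ge_if_not_waiting_for_LL[OF n vol \<rho>] that by metis
  qed
  then show ?thesis
    using valid_adv[OF n, of M] by (intro SUP_upper2[where i = "(adv_conf n M, adv_rx n M, \<sigma>)"]) auto
qed

lemma RT_stab_single_reaction_ge:
  assumes "3 \<le> n" "0 < \<phi> n"
  shows "ennreal (\<phi> n / 2) \<le> RT_stab species reactions id target \<phi> (\<lambda>\<rho>. \<forall>c. card (\<rho> c) \<le> 1) n"
  unfolding RT_stab_def using assms SUP_RT_exec_ge by (intro INF_greatest) auto

lemma RT_stab_single_reaction_ge_linear:
  assumes pos: "\<forall>n. 0 < \<phi> n" and omega: "\<phi> \<in> \<Omega>(\<lambda>n. real n)"
  obtains k N where "0 < k"
    "\<forall>n\<ge>N. ennreal (k * real n) \<le> RT_stab species reactions id target \<phi> (\<lambda>\<rho>. \<forall>c. card (\<rho> c) \<le> 1) n"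
proof -
  from omega obtain c where c: "0 < c" and "eventually (\<lambda>n. c * norm (real n) \<le> norm (\<phi> n)) at_top"
    by (elim landau_omega.bigE)
  then obtain N where N: "\<And>n. N \<le> n \<Longrightarrow> c * real n \<le> \<phi> n"
    using pos by (auto simp: eventually_at_top_linorder abs_of_pos)
  have "ennreal (c / 2 * real n) \<le> RT_stab species reactions id target \<phi> (\<lambda>\<rho>. \<forall>c. card (\<rho> c) \<le> 1) n"
    if "max 3 N \<le> n" for n
  proof -
    have "ennreal (c / 2 * real n) \<le> ennreal (\<phi> n / 2)"
      using N[of n] that by (intro ennreal_leI) simp
    also have "\<dots> \<le> RT_stab species reactions id target \<phi> (\<lambda>\<rho>. \<forall>c. card (\<rho> c) \<le> 1) n"
      using RT_stab_single_reaction_ge pos that by simp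
    finally show ?thesis .
  qed
  then show ?thesis
    using c that[of "c / 2" "max 3 N"] by simp
qed

theorem proposition7p2:
  shows "\<exists>S R U \<mu> C. crn_protocol S R U \<mu> C \<and> stably_correct S R \<mu> C \<and>
     (\<forall>\<phi>::nat \<Rightarrow> real. (\<forall>n. 0 < \<phi> n) \<and> \<phi> \<in> \<Theta>(\<lambda>n. real n) \<longrightarrow>
        (\<exists>K::real. \<exists>N. \<forall>n\<ge>N. RT_stab S R \<mu> C \<phi> (\<lambda>_. True) n \<le> ennreal (K * ln (real n))) \<and>
        (\<exists>k::real. 0 < k \<and> (\<exists>N. \<forall>n\<ge>N.
            ennreal (k * real n) \<le> RT_stab S R \<mu> C \<phi> (\<lambda>\<rho>. \<forall>c. card (\<rho> c) \<le> 1) n)))"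
proof -
  have "(\<exists>K N. \<forall>n\<ge>N. RT_stab species reactions id target \<phi> (\<lambda>_. True) n \<le> ennreal (K * ln (real n))) \<and>
      (\<exists>k>0. \<exists>N. \<forall>n\<ge>N.
         ennreal (k * real n) \<le> RT_stab species reactions id target \<phi> (\<lambda>\<rho>. \<forall>c. card (\<rho> c) \<le> 1) n)"
    if \<phi>: "(\<forall>n. 0 < \<phi> n) \<and> \<phi> \<in> \<Theta>(\<lambda>n. real n)" for \<phi>
  proof
    show "\<exists>K N. \<forall>n\<ge>N. RT_stab species reactions id target \<phi> (\<lambda>_. True) n \<le> ennreal (K * ln (real n))"
      using RT_stab_le_ln \<phi> by blast
    obtain k N where "0 < k"
      "\<forall>n\<ge>N. ennreal (k * real n) \<le> RT_stab species reactions id target \<phi> (\<lambda>\<rho>. \<forall>c. card (\<rho> c) \<le> 1) n"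
      using RT_stab_single_reaction_ge_linear \<phi> by blast
    then show "\<exists>k>0. \<exists>N. \<forall>n\<ge>N.
        ennreal (k * real n) \<le> RT_stab species reactions id target \<phi> (\<lambda>\<rho>. \<forall>c. card (\<rho> c) \<le> 1) n"
      by blast
  qed
  then show ?thesis
    using crn_protocol_reactions stably_correct_reactions by blast
qed

end
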